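(* Let $h\in\mathbb C(s)$ be a rational function whose poles all belong to $\{0,\infty\}$. If $h^{\iota_1}=h$, then there exists $H\in\mathbb C[1/x]$ such that $H(x(s))=h(s)$. Analogously, if $h^{\iota_2}=h$, then there exists $H\in\mathbb C[1/y]$ such that $H(y(s))=h(s)$.
   Context: $x(s),y(s)\in\mathbb C(s)$ are the coordinates of a fixed rational parametrization of the kernel curve of a genus-zero weighted quadrant walk model, with the following known properties: their divisors on $\mathbb P^1$ are $(x)=0+\infty-Q_1-Q_2$ and $(y)=0+\infty-Q_3-Q_4$ for points $Q_i\notin\{0,\infty\}$; there is a real $q\notin\{-1,1\}$ such that, with $\iota_1(s)=1/s$ and $\iota_2(s)=q/s$, the extension $\mathbb C(s)/\mathbb C(x(s))$ is Galois of degree $2$ with group generated by $h\mapsto h^{\iota_1}$, and $\mathbb C(s)/\mathbb C(y(s))$ is Galois of degree $2$ with group generated by $h\mapsto h^{\iota_2}$. Here $h^\tau=h\circ\tau$. *)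

theory Defs
  imports "HOL-Computational_Algebra.Computational_Algebra" "HOL-Computational_Algebra.Field_as_Ring"
begin

type_synonym rfun = "complex poly fract"

definition rconst :: "complex \<Rightarrow> rfun" where
  "rconst c = Fract [:c:] 1"

definition svar :: rfun where
  "svar = Fract [:0, 1:] 1"

definition peval :: "complex poly \<Rightarrow> rfun \<Rightarrow> rfun" where
  "peval P g = poly (map_poly rconst P) g"

definition rcomp :: "rfun \<Rightarrow> rfun \<Rightarrow> rfun" where
  "rcomp h g = (case quot_of_fract h of (p, q) \<Rightarrow> peval p g / peval q g)"

definition rord :: "rfun \<Rightarrow> complex \<Rightarrow> int" where
  "rord h a = (case quot_of_fract h of (p, q) \<Rightarrow> int (order a p) - int (order a q))"

definition rord_inf :: "rfun \<Rightarrow> int" where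
  "rord_inf h = (case quot_of_fract h of (p, q) \<Rightarrow> int (degree q) - int (degree p))"

text \<open>Points of P^1 are modelled as complex option, with None = \<infinity>.
  Divisor of a nonzero rational function, as a function P^1 \<Rightarrow> int.\<close>
definition rdivisor :: "rfun \<Rightarrow> complex option \<Rightarrow> int" where
  "rdivisor h P = (case P of None \<Rightarrow> rord_inf h | Some a \<Rightarrow> rord h a)"

definition pt :: "complex option \<Rightarrow> complex option \<Rightarrow> int" where
  "pt P Q = (if Q = P then 1 else 0)"

definition rpoles :: "rfun \<Rightarrow> complex option set" where
  "rpoles h = {P. h \<noteq> 0 \<and> rdivisor h P < 0}"

definition gen_field :: "rfun \<Rightarrow> rfun set" where
  "gen_field g = {rcomp R g | R. True}"

text \<open>Fixed field of the automorphism h \<mapsto> h^\<iota> = h \<circ> \<iota>.\<close>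
definition fixed_field :: "rfun \<Rightarrow> rfun set" where
  "fixed_field \<iota> = {h. rcomp h \<iota> = h}"

end

theory Submission
  imports Defs
begin

text \<open>
  The divisor of \<open>x\<close> forces \<open>x = c s / q(s)\<close> with \<open>q\<close> quadratic and \<open>q(0) \<noteq> 0\<close>.
  Invariance of \<open>x\<close> under \<open>s \<mapsto> t/s\<close> (the Galois hypothesis is used only for this)
  forces \<open>q(0) = t \<cdot> lead q\<close>, so \<open>1/x\<close> is an affine function of \<open>u = s + t/s\<close>.
  A function whose poles lie in \<open>{0, \<infinity>}\<close> is a Laurent polynomial \<open>p(s)/s\<^sup>k\<close> with
  \<open>deg p \<le> 2k\<close>. If it is invariant, subtracting \<open>c u\<^sup>k\<close>, with \<open>c\<close> the top coefficient
  of \<open>p\<close>, leaves an invariant Laurent polynomial whose top and, by invariance, bottom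
  coefficients vanish; so by induction on \<open>k\<close> it is a polynomial in \<open>u\<close>, hence in \<open>1/x\<close>.
\<close>

lemma rconst_eq_to_fract: "rconst c = to_fract [:c:]"
  by (simp add: rconst_def to_fract_def)

lemma svar_eq_to_fract: "svar = to_fract [:0, 1:]"
  by (simp add: svar_def to_fract_def)

lemma svar_nonzero [simp]: "svar \<noteq> 0"
  by (simp add: svar_eq_to_fract)

lemma rconst_0 [simp]: "rconst 0 = 0"
  by (simp add: rconst_eq_to_fract)

lemma rconst_1 [simp]: "rconst 1 = 1"
  by (simp add: rconst_eq_to_fract flip: one_pCons)

lemma rconst_eq_0_iff [simp]: "rconst c = 0 \<longleftrightarrow> c = 0"
  by (simp add: rconst_eq_to_fract)

lemma rconst_add: "rconst (a + b) = rconst a + rconst b"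
  by (simp add: rconst_eq_to_fract flip: to_fract_add)

lemma rconst_mult: "rconst (a * b) = rconst a * rconst b"
  by (simp add: rconst_eq_to_fract flip: to_fract_mult)

lemma rconst_uminus: "rconst (- a) = - rconst a"
  by (simp add: rconst_eq_to_fract flip: to_fract_uminus)

lemma rconst_power: "rconst (a ^ n) = rconst a ^ n"
  by (induction n) (simp_all add: rconst_mult)

lemma rconst_divide: "rconst (a / b) = rconst a / rconst b"
proof (cases "b = 0")
  case False
  then have "rconst (a / b) * rconst b = rconst a"
    by (simp flip: rconst_mult)
  with False show ?thesis
    by (simp add: field_simps)
qed simp

lemma to_fract_power: "to_fract (p ^ n) = to_fract p ^ n"
  by (induction n) simp_all

lemma to_fract_smult: "to_fract (smult c p) = rconst c * to_fract p"
  by (simp add: rconst_eq_to_fract flip: to_fract_mult)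

lemma to_fract_monom: "to_fract (monom c n) = rconst c * svar ^ n"
  by (simp add: monom_altdef to_fract_smult to_fract_power svar_eq_to_fract)

lemma peval_0 [simp]: "peval 0 g = 0"
  by (simp add: peval_def)

lemma peval_pCons [simp]: "peval (pCons a p) g = rconst a + g * peval p g"
  by (simp add: peval_def map_poly_pCons)

lemma peval_add [simp]: "peval (p + q) g = peval p g + peval q g"
proof (induction p arbitrary: q)
  case (pCons a p)
  then show ?case
    by (cases q rule: pCons_cases) (simp add: rconst_add algebra_simps)
qed simp

lemma peval_smult [simp]: "peval (smult c p) g = rconst c * peval p g"
  by (induction p) (simp_all add: rconst_mult algebra_simps)

lemma peval_mult [simp]: "peval (p * q) g = peval p g * peval q g"
  by (induction p) (simp_all add: algebra_simps)

lemma peval_1 [simp]: "peval 1 g = 1"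
  by (simp add: one_pCons)

lemma peval_uminus [simp]: "peval (- p) g = - peval p g"
  using peval_smult[of "-1" p g] by (simp add: rconst_uminus)

lemma peval_diff [simp]: "peval (p - q) g = peval p g - peval q g"
  using peval_add[of p "- q" g] by simp

lemma peval_power [simp]: "peval (p ^ n) g = peval p g ^ n"
  by (induction n) simp_all

lemma peval_monom [simp]: "peval (monom c n) g = rconst c * g ^ n"
  by (simp add: monom_altdef)

lemma peval_pcompose: "peval (pcompose p q) g = peval p (peval q g)"
  by (induction p) (simp_all add: pcompose_pCons)

lemma peval_svar [simp]: "peval p svar = to_fract p"
proof (induction p)
  case (pCons a p)
  have "pCons a p = [:a:] + [:0, 1:] * p"
    by simp
  then have "to_fract (pCons a p) = rconst a + svar * to_fract p"
    by (simp only: rconst_eq_to_fract svar_eq_to_fract to_fract_add to_fract_mult)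
  with pCons show ?case
    by simp
qed simp

lemma quot_of_fractE:
  obtains p q where "quot_of_fract h = (p, q)" "coprime p q" "q \<noteq> 0"
    "h = to_fract p / to_fract q"
proof -
  obtain p q where pq: "quot_of_fract h = (p, q)"
    by (cases "quot_of_fract h")
  show thesis
    by (rule that[OF pq])
      (use coprime_quot_of_fract[of h] snd_quot_of_fract_nonzero[of h] Fract_quot_of_fract[of h] pq
        in \<open>simp_all add: Fract_conv_to_fract\<close>)
qed

lemma rcomp_fract:
  assumes "b \<noteq> 0" and "peval b g \<noteq> 0"
  shows "rcomp (to_fract a / to_fract b) g = peval a g / peval b g"
proof -
  obtain p q where pq: "quot_of_fract (to_fract a / to_fract b) = (p, q)" "coprime p q" "q \<noteq> 0"
    "to_fract a / to_fract b = to_fract p / to_fract q"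
    by (rule quot_of_fractE)
  then have cross: "a * q = p * b"
    using assms(1) by (simp add: field_simps flip: to_fract_mult)
  then have "q dvd b"
    using pq(2) by (metis coprime_commute coprime_dvd_mult_right_iff dvd_triv_right)
  then obtain r where "b = q * r" ..
  \<comment> \<open>The reduced denominator divides \<open>b\<close>, so it does not vanish at \<open>g\<close> either.\<close>
  then have "peval q g \<noteq> 0"
    using assms(2) by auto
  moreover have "peval a g * peval q g = peval p g * peval b g"
    using cross by (metis peval_mult)
  ultimately show ?thesis
    using pq(1) assms(2) by (simp add: rcomp_def field_simps)
qed

lemma rcomp_svar [simp]: "rcomp svar g = g"
  using rcomp_fract[of 1 g "[:0, 1:]"] by (simp add: svar_eq_to_fract)

lemma rcomp_eq_if_fixed_field_eq_gen_field:
  assumes "fixed_field \<iota> = gen_field g"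
  shows "rcomp g \<iota> = g"
proof -
  have "g \<in> gen_field g"
    unfolding gen_field_def by (metis (mono_tags) mem_Collect_eq rcomp_svar)
  with assms show ?thesis
    unfolding fixed_field_def by blast
qed

lemma not_root_if_order_le:
  fixes p q :: "complex poly"
  assumes "coprime p q" "p \<noteq> 0" "q \<noteq> 0" "order a q \<le> order a p"
  shows "poly q a \<noteq> 0"
proof
  assume "poly q a = 0"
  moreover from this have "poly p a = 0"
    using assms(2-4) by (simp add: order_root)
  ultimately have "is_unit [:-a, 1:]"
    using assms(1) coprime_common_divisor by (simp add: poly_eq_0_iff_dvd)
  then show False
    by (simp add: is_unit_iff_degree)
qed

lemma eq_monom_if_no_nonzero_root:
  fixes p :: "complex poly"
  assumes "p \<noteq> 0" and no_root: "\<And>a. a \<noteq> 0 \<Longrightarrow> poly p a \<noteq> 0"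
  obtains c where "c \<noteq> 0" "p = monom c (order 0 p)"
proof -
  obtain r where r: "p = [:0, 1:] ^ order 0 p * r" and r0: "\<not> [:0, 1:] dvd r"
    using order_decomp[OF assms(1), of 0] by auto
  have "poly r a \<noteq> 0" for a
  proof (cases "a = 0")
    case True
    with r0 show ?thesis
      by (simp add: poly_eq_0_iff_dvd)
  next
    case False
    with r show ?thesis
      using no_root by (metis mult_zero_right poly_mult)
  qed
  then obtain c where "c \<noteq> 0" "r = [:c:]"
    using fundamental_theorem_of_algebra_alt[of r] by blast
  with r show thesis
    by (intro that) (simp_all add: monom_altdef mult.commute)
qed

lemma degree_le_if_coeff_Suc_eq_0:
  assumes "degree p \<le> Suc n" and "coeff p (Suc n) = 0"
  shows "degree p \<le> n"
  using assms by (metis degree_0 le0 le_Suc_eq leading_coeff_0_iff)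

lemma laurent_form_if_poles_in_0_inf:
  assumes "h \<noteq> 0" and "rpoles h \<subseteq> {Some 0, None}"
  obtains p k where "degree p \<le> 2 * k" "h = to_fract p / svar ^ k"
proof -
  obtain p q where pq: "quot_of_fract h = (p, q)" "coprime p q" "q \<noteq> 0"
    "h = to_fract p / to_fract q"
    by (rule quot_of_fractE)
  have "p \<noteq> 0"
    using assms(1) pq(4) by auto
  have "poly q a \<noteq> 0" if "a \<noteq> 0" for a
  proof (rule not_root_if_order_le[OF pq(2) \<open>p \<noteq> 0\<close> pq(3)])
    have "Some a \<notin> rpoles h"
      using assms(2) that by auto
    then have "rdivisor h (Some a) \<ge> 0"
      using assms(1) by (simp add: rpoles_def)
    then show "order a q \<le> order a p"
      using pq(1) by (simp add: rdivisor_def rord_def)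
  qed
  then obtain c where c: "c \<noteq> 0" "q = monom c (order 0 q)"
    using eq_monom_if_no_nonzero_root[OF pq(3)] by blast
  define m n where "m = order 0 q" and "n = degree p"
  define p' where "p' = smult (1 / c) p * [:0, 1:] ^ n"
  have q_eq: "to_fract q = rconst c * svar ^ m"
    using c(2) by (metis m_def to_fract_monom)
  have "degree p' \<le> n + n"
    unfolding p'_def by (rule order.trans[OF degree_mult_le]) (simp add: n_def degree_power_eq)
  then have "degree p' \<le> 2 * (m + n)"
    by simp
  moreover have "h = to_fract p' / svar ^ (m + n)"
    using c(1) pq(4) q_eq by (simp add: p'_def to_fract_smult to_fract_power svar_eq_to_fract
        rconst_divide power_add field_simps)
  ultimately show thesis
    by (rule that)
qed

lemma linear_over_quadratic_if_divisor:
  assumes "x \<noteq> 0" and ord_0: "rdivisor x (Some 0) = 1" and ord_inf: "rdivisor x None = 1"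
    and no_zero: "\<And>a. a \<noteq> 0 \<Longrightarrow> rdivisor x (Some a) \<le> 0"
  obtains c q where "c \<noteq> 0" "degree q = 2" "poly q 0 \<noteq> 0" "x = rconst c * svar / to_fract q"
proof -
  obtain p q where pq: "quot_of_fract x = (p, q)" "coprime p q" "q \<noteq> 0"
    "x = to_fract p / to_fract q"
    by (rule quot_of_fractE)
  have "p \<noteq> 0"
    using assms(1) pq(4) by auto
  have order_0: "order 0 p = order 0 q + 1"
    using ord_0 pq(1) by (simp add: rdivisor_def rord_def)
  then have q0: "poly q 0 \<noteq> 0"
    using not_root_if_order_le[OF pq(2) \<open>p \<noteq> 0\<close> pq(3)] by simp
  then have "order 0 p = 1"
    using order_0 by (simp add: order_root)
  have "poly p a \<noteq> 0" if "a \<noteq> 0" for a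
  proof (rule not_root_if_order_le)
    show "order a p \<le> order a q"
      using no_zero[OF that] pq(1) by (simp add: rdivisor_def rord_def)
  qed (use pq(2,3) \<open>p \<noteq> 0\<close> in \<open>simp_all add: coprime_commute\<close>)
  then obtain c where c: "c \<noteq> 0" "p = monom c 1"
    using eq_monom_if_no_nonzero_root[OF \<open>p \<noteq> 0\<close>] \<open>order 0 p = 1\<close> by metis
  moreover have "degree q = 2"
    using ord_inf pq(1) c by (simp add: rdivisor_def rord_inf_def degree_monom_eq)
  moreover have "x = rconst c * svar / to_fract q"
    using pq(4) c(2) by (simp add: to_fract_monom)
  ultimately show thesis
    using q0 that by blast
qed

lemma s_plus_t_over_s_poly_in_inverse:
  assumes "c \<noteq> 0" "degree q = 2" "poly q 0 \<noteq> 0"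
    and x_eq: "x = rconst c * svar / to_fract q"
    and fixed: "rcomp x (rconst t / svar) = x"
  shows "t \<noteq> 0" and "\<exists>U. peval U (inverse x) = svar + rconst t / svar"
proof -
  define \<iota> where "\<iota> = rconst t / svar"
  define a0 a1 a2 where "a0 = coeff q 0" and "a1 = coeff q 1" and "a2 = coeff q 2"
  have q_eq: "q = [:a0, a1, a2:]"
    unfolding a0_def a1_def a2_def using assms(2)
    by (intro poly_eqI) (auto simp: coeff_pCons coeff_eq_0 numeral_2_eq_2 split: nat.split)
  have "a0 \<noteq> 0"
    using assms(3) by (simp add: a0_def poly_0_coeff_0)
  have "a2 \<noteq> 0"
    using assms(2) leading_coeff_0_iff[of q] by (auto simp: a2_def)
  have "q \<noteq> 0"
    using assms(2) by auto
  define R where "R = [:t^2 * a2, t * a1, a0:]"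
  have q_at_\<iota>: "peval q \<iota> * svar ^ 2 = to_fract R"
    unfolding peval_svar[symmetric, of R] by (simp add: q_eq R_def \<iota>_def rconst_mult rconst_power
        field_simps power2_eq_square del: peval_svar)
  then have "peval q \<iota> \<noteq> 0"
    using \<open>a0 \<noteq> 0\<close> by (auto simp: R_def)
  have "rconst c * \<iota> / peval q \<iota> = rconst c * svar / to_fract q"
  proof -
    have "x = to_fract (monom c 1) / to_fract q"
      by (simp add: x_eq to_fract_monom)
    then have "rcomp x \<iota> = rconst c * \<iota> / peval q \<iota>"
      using rcomp_fract[of q \<iota> "monom c 1"] \<open>peval q \<iota> \<noteq> 0\<close> \<open>q \<noteq> 0\<close> by simp
    then show ?thesis
      using fixed x_eq by (simp add: \<iota>_def)
  qed
  then have "\<iota> * to_fract q = svar * peval q \<iota>"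
    using \<open>peval q \<iota> \<noteq> 0\<close> \<open>q \<noteq> 0\<close> assms(1) by (auto simp: field_simps)
  then have "rconst t * to_fract q = peval q \<iota> * svar ^ 2"
    by (simp add: \<iota>_def power2_eq_square field_simps)
  then have "smult t q = R"
    by (metis q_at_\<iota> to_fract_eq_iff to_fract_smult)
  then have "t * a2 = a0"
    using coeff_smult[of t q 2] by (simp add: R_def a2_def numeral_2_eq_2)
  then show "t \<noteq> 0"
    using \<open>a0 \<noteq> 0\<close> by auto
  have "to_fract q = svar * (rconst a2 * (svar + \<iota>) + rconst a1)"
    unfolding peval_svar[symmetric, of q]
    by (simp add: q_eq \<iota>_def field_simps power2_eq_square flip: \<open>t * a2 = a0\<close> add: rconst_mult
        del: peval_svar)
  then have "inverse x = (rconst a2 * (svar + \<iota>) + rconst a1) / rconst c"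
    by (simp add: x_eq)
  then have "peval [:- a1 / a2, c / a2:] (inverse x) = svar + \<iota>"
    using \<open>a2 \<noteq> 0\<close> assms(1) by (simp add: rconst_divide rconst_uminus field_simps)
  then show "\<exists>U. peval U (inverse x) = svar + rconst t / svar"
    unfolding \<iota>_def by blast
qed

lemma peval_inversion_clear_denominator:
  assumes "degree p \<le> n"
  shows "\<exists>r. peval p (rconst t / svar) * svar ^ n = to_fract r"
  using assms
proof (induction p arbitrary: n)
  case (pCons a p)
  show ?case
  proof (cases "p = 0")
    case True
    then show ?thesis
      by (metis peval_0 peval_pCons add_0_right mult_zero_right to_fract_monom)
  next
    case False
    with pCons.prems obtain m where n: "n = Suc m" and "degree p \<le> m"
      by (cases n) auto
    then obtain r where "peval p (rconst t / svar) * svar ^ m = to_fract r"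
      using pCons.IH by blast
    then have "peval (pCons a p) (rconst t / svar) * svar ^ n = to_fract (monom a n + smult t r)"
      by (simp add: n to_fract_monom to_fract_smult field_simps)
    then show ?thesis
      by blast
  qed
qed simp

lemma svar_plus_t_over_svar_eq: "svar + rconst t / svar = to_fract [:t, 0, 1:] / svar"
  unfolding peval_svar[symmetric, of "[:t, 0, 1:]"]
  by (simp add: field_simps power2_eq_square del: peval_svar)

definition inversion_invariant :: "complex \<Rightarrow> complex poly \<Rightarrow> nat \<Rightarrow> bool" where
  "inversion_invariant t p k \<longleftrightarrow>
     peval p (rconst t / svar) / (rconst t / svar) ^ k = to_fract p / svar ^ k"

lemma inversion_invariant_diff_smult_power:
  assumes "t \<noteq> 0" and "inversion_invariant t p k"
  shows "inversion_invariant t (p - smult c ([:t, 0, 1:] ^ k)) k"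
proof -
  define \<iota> B where "\<iota> = rconst t / svar" and "B = [:t, 0, 1:]"
  have "\<iota> \<noteq> 0"
    using assms(1) by (simp add: \<iota>_def)
  have B_over_svar: "to_fract B / svar = svar + \<iota>"
    by (simp add: B_def \<iota>_def svar_plus_t_over_svar_eq)
  have B_over_\<iota>: "peval B \<iota> / \<iota> = svar + \<iota>"
    using \<open>\<iota> \<noteq> 0\<close> by (simp add: B_def \<iota>_def field_simps)
  have "peval (p - smult c (B ^ k)) \<iota> / \<iota> ^ k
      = peval p \<iota> / \<iota> ^ k - rconst c * (peval B \<iota> / \<iota>) ^ k"
    by (simp add: diff_divide_distrib power_divide)
  also have "\<dots> = to_fract p / svar ^ k - rconst c * (to_fract B / svar) ^ k"
    unfolding B_over_\<iota> B_over_svar using assms(2) by (simp add: inversion_invariant_def \<iota>_def)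
  also have "\<dots> = to_fract (p - smult c (B ^ k)) / svar ^ k"
    by (simp add: to_fract_smult to_fract_power diff_divide_distrib power_divide)
  finally show ?thesis
    by (simp add: inversion_invariant_def \<iota>_def B_def)
qed

lemma inversion_invariant_pCons_0_iff:
  assumes "t \<noteq> 0"
  shows "inversion_invariant t (pCons 0 p) (Suc k) \<longleftrightarrow> inversion_invariant t p k"
  using assms by (simp add: inversion_invariant_def flip: peval_svar)

lemma coeff_0_eq_0_if_inversion_invariant:
  assumes "t \<noteq> 0" and "degree p \<le> 2 * k + 1" and "inversion_invariant t p (Suc k)"
  shows "coeff p 0 = 0"
proof -
  obtain r where r: "peval p (rconst t / svar) * svar ^ (2 * k + 1) = to_fract r"
    using peval_inversion_clear_denominator[OF assms(2)] by blast
  \<comment> \<open>\<open>s^(2k+2) p(t/s) = t^(k+1) p(s)\<close>, and the left-hand side is divisible by \<open>s\<close>.\<close>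
  have "to_fract ([:0, 1:] * r) = svar * to_fract r"
    by (simp only: svar_eq_to_fract to_fract_mult)
  also have "\<dots> = peval p (rconst t / svar) * svar ^ Suc k * svar ^ Suc k"
    by (simp flip: r power_add add: mult_ac mult_2 mult_2_right)
  also have "\<dots> = rconst t ^ Suc k * to_fract p"
    using assms(1,3) by (simp add: inversion_invariant_def field_simps)
  also have "\<dots> = to_fract (smult (t ^ Suc k) p)"
    by (simp only: to_fract_smult rconst_power)
  finally have "[:0, 1:] * r = smult (t ^ Suc k) p"
    by (simp only: to_fract_eq_iff)
  then have "t ^ Suc k * coeff p 0 = 0"
    by (metis coeff_pCons_0 coeff_smult mult_pCons_left smult_0_left add_0)
  then show ?thesis
    using assms(1) by simp
qed

lemma laurent_poly_in_s_plus_t_over_s_if_inversion_invariant: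
  assumes "t \<noteq> 0" and "degree p \<le> 2 * k" and "inversion_invariant t p k"
  shows "\<exists>H. to_fract p / svar ^ k = peval H (svar + rconst t / svar)"
  using assms(2,3)
proof (induction k arbitrary: p)
  case 0
  then obtain a where "p = [:a:]"
    by (auto elim: degree_eq_zeroE)
  then show ?case
    by (intro exI[of _ p]) (simp add: rconst_eq_to_fract)
next
  case (Suc k)
  define B where "B = [:t, 0, 1:]"
  define c where "c = coeff p (2 * Suc k)"
  define p' where "p' = p - smult c (B ^ Suc k)"
  have "inversion_invariant t p' (Suc k)"
    unfolding p'_def B_def by (rule inversion_invariant_diff_smult_power[OF \<open>t \<noteq> 0\<close> Suc.prems(2)])
  have B_pow: "degree (B ^ Suc k) = 2 * Suc k" "lead_coeff (B ^ Suc k) = 1"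
    by (simp add: B_def degree_power_eq del: power_Suc)
      (simp only: lead_coeff_power, simp add: B_def)
  have "degree p' \<le> Suc (2 * k + 1)"
    unfolding p'_def using Suc.prems(1) B_pow(1)
    by (intro degree_diff_le order.trans[OF degree_smult_le]) simp_all
  moreover have "coeff p' (Suc (2 * k + 1)) = 0"
    using B_pow by (simp add: p'_def c_def)
  ultimately have "degree p' \<le> 2 * k + 1"
    by (rule degree_le_if_coeff_Suc_eq_0)
  moreover from this have "coeff p' 0 = 0"
    by (rule coeff_0_eq_0_if_inversion_invariant[OF \<open>t \<noteq> 0\<close> _ \<open>inversion_invariant t p' (Suc k)\<close>])
  then obtain p'' where p'': "p' = pCons 0 p''"
    by (cases p' rule: pCons_cases) simp
  ultimately have "degree p'' \<le> 2 * k"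
    by (cases "p'' = 0") simp_all
  moreover have "inversion_invariant t p'' k"
    using \<open>inversion_invariant t p' (Suc k)\<close> inversion_invariant_pCons_0_iff[OF \<open>t \<noteq> 0\<close>] p''
    by simp
  ultimately obtain H where H: "to_fract p'' / svar ^ k = peval H (svar + rconst t / svar)"
    using Suc.IH by blast
  have "to_fract B / svar = svar + rconst t / svar"
    by (simp add: B_def svar_plus_t_over_svar_eq)
  moreover have "to_fract p / svar ^ Suc k
      = to_fract p' / svar ^ Suc k + rconst c * (to_fract B / svar) ^ Suc k"
    by (simp add: p'_def to_fract_smult to_fract_power diff_divide_distrib power_divide)
  moreover have "to_fract p' / svar ^ Suc k = to_fract p'' / svar ^ k"
    using peval_pCons[of 0 p'' svar] by (simp add: p'')
  ultimately have "to_fract p / svar ^ Suc k = peval (H + monom c (Suc k)) (svar + rconst t / svar)"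
    by (simp add: H)
  then show ?case ..
qed

lemma poly_in_inverse_if_inversion_invariant:
  assumes "x \<noteq> 0" "rdivisor x (Some 0) = 1" "rdivisor x None = 1"
    "\<And>a. a \<noteq> 0 \<Longrightarrow> rdivisor x (Some a) \<le> 0"
    and x_fixed: "rcomp x (rconst t / svar) = x"
    and h_poles: "rpoles h \<subseteq> {Some 0, None}" and h_fixed: "rcomp h (rconst t / svar) = h"
  shows "\<exists>H. peval H (inverse x) = h"
proof -
  obtain c q where "c \<noteq> 0" "degree q = 2" "poly q 0 \<noteq> 0" "x = rconst c * svar / to_fract q"
    using linear_over_quadratic_if_divisor[OF assms(1-4)] .
  note s_plus_t_over_s_poly_in_inverse[OF this x_fixed]
  then obtain U where "t \<noteq> 0" and U: "peval U (inverse x) = svar + rconst t / svar"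
    by blast
  have "\<exists>H. h = peval H (svar + rconst t / svar)"
  proof (cases "h = 0")
    case True
    then show ?thesis
      by (intro exI[of _ 0]) simp
  next
    case False
    then obtain p k where "degree p \<le> 2 * k" and h_eq: "h = to_fract p / svar ^ k"
      using laurent_form_if_poles_in_0_inf[OF _ h_poles] by blast
    moreover have "rcomp h (rconst t / svar) = peval p (rconst t / svar) / (rconst t / svar) ^ k"
      unfolding h_eq using rcomp_fract[of "[:0, 1:] ^ k" "rconst t / svar" p] \<open>t \<noteq> 0\<close>
      by (simp add: to_fract_power svar_eq_to_fract)
    then have "inversion_invariant t p k"
      using h_fixed h_eq by (simp add: inversion_invariant_def)
    ultimately show ?thesis
      using laurent_poly_in_s_plus_t_over_s_if_inversion_invariant[OF \<open>t \<noteq> 0\<close>] h_eq by metis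
  qed
  then obtain H where "h = peval H (svar + rconst t / svar)" ..
  then have "peval (pcompose H U) (inverse x) = h"
    by (simp add: peval_pcompose U)
  then show ?thesis ..
qed

theorem lemma2p4:
  fixes x y :: rfun and Q1 Q2 Q3 Q4 :: complex and q :: real
  assumes Q: "Q1 \<noteq> 0" "Q2 \<noteq> 0" "Q3 \<noteq> 0" "Q4 \<noteq> 0"
    and x_nz: "x \<noteq> 0" and y_nz: "y \<noteq> 0"
    and div_x: "rdivisor x = (\<lambda>P. pt (Some 0) P + pt None P - pt (Some Q1) P - pt (Some Q2) P)"
    and div_y: "rdivisor y = (\<lambda>P. pt (Some 0) P + pt None P - pt (Some Q3) P - pt (Some Q4) P)"
    and q: "q \<noteq> 1" "q \<noteq> -1"
    and gal_x: "fixed_field (rconst 1 / svar) = gen_field x"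
    and gal_y: "fixed_field (rconst (complex_of_real q) / svar) = gen_field y"
  shows "(\<forall>h. rpoles h \<subseteq> {Some 0, None} \<longrightarrow> rcomp h (rconst 1 / svar) = h \<longrightarrow>
            (\<exists>H :: complex poly. peval H (inverse x) = h))
       \<and> (\<forall>h. rpoles h \<subseteq> {Some 0, None} \<longrightarrow> rcomp h (rconst (complex_of_real q) / svar) = h \<longrightarrow>
            (\<exists>H :: complex poly. peval H (inverse y) = h))"
  using poly_in_inverse_if_inversion_invariant[OF x_nz _ _ _ rcomp_eq_if_fixed_field_eq_gen_field[OF gal_x]]
    poly_in_inverse_if_inversion_invariant[OF y_nz _ _ _ rcomp_eq_if_fixed_field_eq_gen_field[OF gal_y]] Q
  by (simp add: div_x div_y pt_def)

end
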